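(* Let $q$ be a prime power, $e\in\{0,1,2\}$, $r$ an integer ($r$ odd if $e\in\{0,2\}$, $r$ even if $e=1$), and let $\{\Sigma_1,\dots,\Sigma_{N+1}\}$, $N=q^{\frac{r+e+1}{2}}$, be a spread of a non-degenerate quadric $\mathcal Q_{r+2,e}$ of ${\rm PG}(r+2,q)$ with associated polarity $\perp$. Fix a point $P\in\Sigma_{N+1}$ and a hyperplane $\mathcal U\cong{\rm PG}(r+1,q)$ of ${\rm PG}(r+2,q)$ with $P\notin\mathcal U$. Put $H=\mathcal U\cap P^\perp$ (an $r$-space, a hyperplane of $\mathcal U$), and $S_i=\langle P,\Sigma_i\rangle\cap\mathcal U$ for $i=1,\dots,N$. Then $\mathcal P=\{S_1,\dots,S_N\}$ is a hyperbolic, parabolic or elliptic avsp of $\mathcal U$ (with respect to the hyperplane $H$ and the quadric $\mathcal Q_{r,e}=H\cap\mathcal Q_{r+2,e}$, with fixed generator $\Pi=\Sigma_{N+1}\cap H$), according as $e=0,1,2$ respectively.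
   Context: Notation: $\mathcal Q_{m,e}$ denotes a non-degenerate quadric of ${\rm PG}(m,q)$ which is hyperbolic $\mathcal Q^+(m,q)$ if $e=0$ ($m$ odd), parabolic $\mathcal Q(m,q)$ if $e=1$ ($m$ even), elliptic $\mathcal Q^-(m,q)$ if $e=2$ ($m$ odd). The polarity $\perp$ associated with the quadric is the one defined by the polar (bilinear) form of the quadratic form; for a point $P$ of the quadric, $P^\perp$ is its tangent hyperplane. A generator of $\mathcal Q_{m,e}$ is a projective subspace of maximal dimension contained in it; generators are $\frac{m-e-1}{2}$-dimensional. A spread of $\mathcal Q_{m,e}$ is a set of $q^{\frac{m+e-1}{2}}+1$ pairwise disjoint generators. An $s$-space means an $s$-dimensional projective subspace. Affine vector space partition (avsp): given a hyperplane $H$ of ${\rm PG}(r+1,q)$, an avsp (with respect to $H$) is a set $\mathcal P$ of subspaces, none contained in $H$, such that every point of ${\rm PG}(r+1,q)\setminus H$ lies in exactly one member of $\mathcal P$. Hyperbolic/parabolic/elliptic avsp: with $e=0,1,2$ respectively, an avsp $\mathcal P=\{S_1,\dots,S_N\}$ of ${\rm PG}(r+1,q)$ with respect to $H$, where $N=q^{\frac{r+e+1}{2}}$ and every $S_i$ is a $\frac{r-e+1}{2}$-space, such that the sets $\Pi_i=S_i\cap H$ are $N$ generators of a non-degenerate quadric $\mathcal Q_{r,e}\subset H$ with: (1) each $\Pi_i$ disjoint from a fixed generator $\Pi$ of $\mathcal Q_{r,e}$; (2) distinct $S_i,S_j$ meet in at most one point, and distinct $\Pi_i,\Pi_j$ meet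 in at most one point; (3) if $|\Pi_i\cap\Pi_j|=1$, then $\langle S_i,S_j\rangle\cap\mathcal Q_{r,e}$ is a non-degenerate hyperbolic quadric $\mathcal Q^+(r-e,q)$. *)

theory Defs
  imports "HOL-Analysis.Analysis"
begin

text \<open>Vector-space model of PG(n-1,q): the ambient space is the vector space
  'a^'n over a finite field 'a (q = CARD('a)); projective subspaces are linear
  subspaces (the projective dimension is vec.dim - 1); points are 1-dimensional
  subspaces.\<close>

definition quadratic_form :: "('a::field ^ 'n \<Rightarrow> 'a) \<Rightarrow> bool" where
  "quadratic_form Q \<longleftrightarrow> (\<exists>A :: 'a ^ 'n ^ 'n. \<forall>v. Q v = (\<Sum>i\<in>UNIV. \<Sum>j\<in>UNIV. A $ i $ j * v $ i * v $ j))"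

definition polar :: "('a::field ^ 'n \<Rightarrow> 'a) \<Rightarrow> 'a ^ 'n \<Rightarrow> 'a ^ 'n \<Rightarrow> 'a" where
  "polar Q u v = Q (u + v) - Q u - Q v"

definition perp :: "('a::field ^ 'n \<Rightarrow> 'a) \<Rightarrow> ('a ^ 'n) set \<Rightarrow> ('a ^ 'n) set" where
  "perp Q X = {v. \<forall>u\<in>X. polar Q u v = 0}"

definition totally_singular :: "('a::field ^ 'n \<Rightarrow> 'a) \<Rightarrow> ('a ^ 'n) set \<Rightarrow> bool" where
  "totally_singular Q G \<longleftrightarrow> (\<forall>v\<in>G. Q v = 0)"

definition nondeg_on :: "('a::field ^ 'n \<Rightarrow> 'a) \<Rightarrow> ('a ^ 'n) set \<Rightarrow> bool" where
  "nondeg_on Q W \<longleftrightarrow> (\<forall>v\<in>W. v \<noteq> 0 \<and> Q v = 0 \<longrightarrow> (\<exists>w\<in>W. polar Q v w \<noteq> 0))"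

definition witt_index :: "('a::field ^ 'n \<Rightarrow> 'a) \<Rightarrow> ('a ^ 'n) set \<Rightarrow> nat" where
  "witt_index Q W = Max {vec.dim G | G. vec.subspace G \<and> G \<subseteq> W \<and> totally_singular Q G}"

definition generator :: "('a::field ^ 'n \<Rightarrow> 'a) \<Rightarrow> ('a ^ 'n) set \<Rightarrow> ('a ^ 'n) set \<Rightarrow> bool" where
  "generator Q W G \<longleftrightarrow> vec.subspace G \<and> G \<subseteq> W \<and> totally_singular Q G \<and> vec.dim G = witt_index Q W"

text \<open>quadric_type Q W m e: Q restricted to the projective m-space W (vector dimension
  m+1) is a non-degenerate quadric Q_{m,e}: hyperbolic (e=0, m odd), parabolic (e=1,
  m even), elliptic (e=2, m odd), i.e. its generators are (m-e-1)/2-dimensional.\<close>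
definition quadric_type :: "('a::field ^ 'n \<Rightarrow> 'a) \<Rightarrow> ('a ^ 'n) set \<Rightarrow> nat \<Rightarrow> nat \<Rightarrow> bool" where
  "quadric_type Q W m e \<longleftrightarrow> e \<le> 2 \<and> odd (m + e) \<and> vec.subspace W \<and> vec.dim W = m + 1
     \<and> nondeg_on Q W \<and> witt_index Q W = (m + 1 - e) div 2"

definition avsp :: "('a::field ^ 'n) set \<Rightarrow> ('a ^ 'n) set \<Rightarrow> (nat \<Rightarrow> ('a ^ 'n) set) \<Rightarrow> nat set \<Rightarrow> bool" where
  "avsp U H S I \<longleftrightarrow> vec.subspace U \<and> vec.subspace H \<and> H \<subseteq> U \<and> vec.dim H + 1 = vec.dim U
     \<and> (\<forall>i\<in>I. vec.subspace (S i) \<and> S i \<subseteq> U \<and> \<not> S i \<subseteq> H)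
     \<and> (\<forall>v\<in>U. v \<notin> H \<longrightarrow> (\<exists>!i. i \<in> I \<and> v \<in> S i))"

definition quadric_avsp :: "('a::{field,finite} ^ 'n \<Rightarrow> 'a) \<Rightarrow> nat \<Rightarrow> nat \<Rightarrow> ('a ^ 'n) set
     \<Rightarrow> ('a ^ 'n) set \<Rightarrow> ('a ^ 'n) set \<Rightarrow> nat \<Rightarrow> (nat \<Rightarrow> ('a ^ 'n) set) \<Rightarrow> bool" where
  "quadric_avsp Q e r U H Pi0 N S \<longleftrightarrow>
     N = CARD('a) ^ ((r + e + 1) div 2)
   \<and> avsp U H S {1..N}
   \<and> vec.dim U = r + 2
   \<and> quadric_type Q H r e
   \<and> generator Q H Pi0
   \<and> (\<forall>i\<in>{1..N}. vec.dim (S i) = (r + 3 - e) div 2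
        \<and> generator Q H (S i \<inter> H) \<and> S i \<inter> H \<inter> Pi0 = {0})
   \<and> (\<forall>i\<in>{1..N}. \<forall>j\<in>{1..N}. i \<noteq> j \<longrightarrow>
        vec.dim (S i \<inter> S j) \<le> 1 \<and> vec.dim (S i \<inter> H \<inter> (S j \<inter> H)) \<le> 1)
   \<and> (\<forall>i\<in>{1..N}. \<forall>j\<in>{1..N}. i \<noteq> j \<longrightarrow> vec.dim (S i \<inter> H \<inter> (S j \<inter> H)) = 1 \<longrightarrow>
        quadric_type Q (vec.span (S i \<union> S j) \<inter> H) (r - e) 0)"

end

theory Submission
  imports Defs
begin

text \<open>Project from the point \<open>p\<close> of the spread element \<open>\<Sigma>\<^sub>N\<^sub>+\<^sub>1\<close> onto \<open>U\<close>. A generator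
  \<open>\<Sigma>\<close> not through \<open>p\<close> spans with \<open>p\<close> a cone meeting \<open>U\<close> in a space \<open>S\<close> of the same
  dimension; \<open>S \<inter> H\<close> lies in \<open>p\<^sup>\<perp>\<close>, so it is totally singular and, having one dimension
  less, a generator of the quadric \<open>H \<inter> Q\<close>, whose Witt index drops by one. Projections of
  disjoint generators can only meet inside \<open>H\<close>, so counting points shows that the sets \<open>S\<^sub>i - H\<close>
  partition \<open>U - H\<close>. If \<open>S\<^sub>i \<inter> S\<^sub>j \<inter> H\<close> is a point, then \<open>p\<close> lies in the hyperbolic space
  spanned by \<open>\<Sigma>\<^sub>i\<close> and \<open>\<Sigma>\<^sub>j\<close>, and cutting that space with \<open>H\<close> leaves a hyperbolic quadric
  again.\<close>

lemma span_insert_subspace_iff: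
  assumes "vec.subspace G"
  shows "x \<in> vec.span (insert v G) \<longleftrightarrow> (\<exists>c y. y \<in> G \<and> x = c *s v + y)"
proof -
  have "vec.span (insert v G) = vec.span ({v} \<union> G)" by simp
  then show ?thesis
    unfolding vec.span_Un vec.span_singleton vec.span_eq_iff[THEN iffD2, OF assms] by auto
qed

lemma dim_span_insert_subspace:
  assumes "vec.subspace G" "v \<notin> G"
  shows "vec.dim (vec.span (insert v G)) = vec.dim G + 1"
  using assms by (simp add: vec.dim_insert vec.span_eq_iff[THEN iffD2, OF assms(1)])

lemma dim_Int_add_one:
  fixes W K :: "('a::field ^ 'n) set"
  assumes W: "vec.subspace W" and K: "vec.subspace K" and "w \<in> W" "w \<notin> K"
    and decompose: "\<And>x. x \<in> W \<Longrightarrow> \<exists>c. x - c *s w \<in> K"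
  shows "vec.dim (W \<inter> K) + 1 = vec.dim W"
proof -
  let ?L = "vec.span {w}"
  have "w \<noteq> 0" using K \<open>w \<notin> K\<close> vec.subspace_0 by blast
  have "?L \<subseteq> W" using vec.span_minimal[of "{w}" W] W \<open>w \<in> W\<close> by blast
  have sum: "{x + y |x y. x \<in> W \<inter> K \<and> y \<in> ?L} = W"
  proof (intro equalityI subsetI)
    fix x assume "x \<in> {x + y |x y. x \<in> W \<inter> K \<and> y \<in> ?L}"
    then show "x \<in> W" using \<open>?L \<subseteq> W\<close> W vec.subspace_add by blast
  next
    fix x assume "x \<in> W"
    then obtain c where "x - c *s w \<in> K" using decompose by blast
    moreover have "x - c *s w \<in> W" using \<open>x \<in> W\<close> \<open>w \<in> W\<close> W vec.subspace_diff vec.subspace_scale by blast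
    moreover have "c *s w \<in> ?L" by (simp add: vec.span_base vec.span_scale)
    ultimately show "x \<in> {x + y |x y. x \<in> W \<inter> K \<and> y \<in> ?L}"
      by (intro CollectI exI[of _ "x - c *s w"] exI[of _ "c *s w"]) simp
  qed
  have "W \<inter> K \<inter> ?L \<subseteq> {0}"
  proof
    fix y assume y: "y \<in> W \<inter> K \<inter> ?L"
    then obtain c where c: "y = c *s w" using vec.span_singleton by blast
    show "y \<in> {0}"
    proof (cases "c = 0")
      case False
      then have "w = inverse c *s y" using c by simp
      then have "w \<in> K" using y K vec.subspace_scale by blast
      then show ?thesis using \<open>w \<notin> K\<close> by blast
    qed (use c in simp)
  qed
  then have "vec.dim (W \<inter> K \<inter> ?L) = 0" by simp
  with vec.dim_sums_Int[OF vec.subspace_inter[OF W K] vec.subspace_span, of "{w}"] \<open>w \<noteq> 0\<close>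
  show ?thesis unfolding sum by simp
qed

lemma dim_span_Un_disjoint:
  fixes S T :: "('a::field ^ 'n) set"
  assumes "vec.subspace S" "vec.subspace T" "S \<inter> T = {0}"
  shows "vec.dim (vec.span (S \<union> T)) = vec.dim S + vec.dim T"
  using vec.dim_sums_Int[OF assms(1,2)] assms
  by (simp add: vec.span_Un vec.span_eq_iff[THEN iffD2])

lemma hyperplane_decomposition:
  fixes U :: "('a::field ^ 'n) set"
  assumes U: "vec.subspace U" and "vec.dim U + 1 = CARD('n)" and "p \<notin> U"
  obtains c u where "u \<in> U" "x = u + c *s p"
proof -
  have "vec.dim (insert p U) = CARD('n)"
    using assms by (simp add: vec.dim_insert vec.span_eq_iff[THEN iffD2, OF U])
  then have "vec.span (insert p U) = UNIV"
    using vec.dim_eq_full[of "insert p U"] by (simp add: vec.dimension_def card_cart_basis)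
  then obtain c u where "u \<in> U" "x = c *s p + u"
    using span_insert_subspace_iff[OF U, of x p] by blast
  then show ?thesis using that[of u c] by (simp add: add.commute)
qed

lemma card_subspace:
  fixes W :: "('a::{field,finite} ^ 'n) set"
  assumes W: "vec.subspace W"
  shows "card W = CARD('a) ^ vec.dim W"
proof -
  obtain B where B: "B \<subseteq> W" "vec.independent B" "W \<subseteq> vec.span B" "card B = vec.dim W"
    using vec.basis_exists by blast
  let ?f = "\<lambda>u. \<Sum>v\<in>B. u v *s v"
  have span_B: "vec.span B = W" using vec.span_minimal[OF B(1) W] B(3) by blast
  have inj: "inj_on ?f (B \<rightarrow>\<^sub>E (UNIV :: 'a set))"
  proof (rule inj_onI)
    fix u u' assume u: "u \<in> B \<rightarrow>\<^sub>E UNIV" and u': "u' \<in> B \<rightarrow>\<^sub>E UNIV" and "?f u = ?f u'"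
    then have "(\<Sum>v\<in>B. (u v - u' v) *s v) = 0"
      by (simp add: vec.scale_left_diff_distrib sum_subtractf)
    moreover have "\<forall>c. (\<Sum>v\<in>B. c v *s v) = 0 \<longrightarrow> (\<forall>v\<in>B. c v = 0)"
      using B(2) unfolding vec.independent_explicit by blast
    ultimately have "\<forall>v\<in>B. u v - u' v = 0" by fastforce
    then show "u = u'" using PiE_ext[OF u u'] by simp
  qed
  have image: "?f ` (B \<rightarrow>\<^sub>E UNIV) = vec.span B"
  proof (intro equalityI subsetI)
    fix x assume "x \<in> ?f ` (B \<rightarrow>\<^sub>E UNIV)"
    then show "x \<in> vec.span B" by (auto intro: vec.span_sum vec.span_scale vec.span_base)
  next
    fix x assume "x \<in> vec.span B"
    then obtain u where "x = ?f u" using vec.span_finite[of B] by auto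
    moreover have "?f (restrict u B) = ?f u" by (rule sum.cong) auto
    ultimately have "x = ?f (restrict u B)" by simp
    moreover have "restrict u B \<in> B \<rightarrow>\<^sub>E UNIV" by simp
    ultimately show "x \<in> ?f ` (B \<rightarrow>\<^sub>E UNIV)" by (rule image_eqI)
  qed
  have "card (vec.span B) = card (B \<rightarrow>\<^sub>E (UNIV :: 'a set))"
    using card_image[OF inj] unfolding image .
  then show ?thesis using span_B B(4) by (simp add: card_funcsetE)
qed

lemma witt_index_ge:
  fixes Q :: "'a::field ^ 'n \<Rightarrow> 'a"
  assumes "vec.subspace G" "G \<subseteq> W" "totally_singular Q G"
  shows "vec.dim G \<le> witt_index Q W"
proof -
  have "finite {vec.dim G | G. vec.subspace G \<and> G \<subseteq> W \<and> totally_singular Q G}"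
    by (rule finite_subset[of _ "{..CARD('n)}"]) (auto intro: dim_subset_UNIV_cart_gen)
  then show ?thesis unfolding witt_index_def using assms by (auto intro!: Max_ge)
qed

lemma witt_index_eqI:
  fixes Q :: "'a::field ^ 'n \<Rightarrow> 'a"
  assumes "\<And>G. vec.subspace G \<Longrightarrow> G \<subseteq> W \<Longrightarrow> totally_singular Q G \<Longrightarrow> vec.dim G \<le> m"
    and "vec.subspace G0" "G0 \<subseteq> W" "totally_singular Q G0" "vec.dim G0 = m"
  shows "witt_index Q W = m"
proof -
  have "finite {vec.dim G | G. vec.subspace G \<and> G \<subseteq> W \<and> totally_singular Q G}"
    by (rule finite_subset[of _ "{..CARD('n)}"]) (auto intro: dim_subset_UNIV_cart_gen)
  then show ?thesis unfolding witt_index_def using assms by (intro Max_eqI) auto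
qed

lemma quadric_index_arith:
  fixes r e w :: nat
  assumes "e \<le> 2" "odd (r + e)" "w = (r + 3 - e) div 2"
  shows "r + 2 - w = (r + e + 1) div 2" "(r + 1 - e) div 2 = w - 1" "2 * w - 3 = r - e"
proof -
  obtain k where k: "r + e = 2 * k + 1" using assms(2) by (rule oddE)
  have "r + 3 - e = 2 * (k + 2 - e)" using k assms(1) by arith
  then have w: "w = k + 2 - e" using assms(3) by simp
  have "r + e + 1 = 2 * (k + 1)" using k by arith
  then have "(r + e + 1) div 2 = k + 1" by simp
  moreover have "r + 2 - w = k + 1" using k w assms(1) by arith
  ultimately show "r + 2 - w = (r + e + 1) div 2" by simp
  have "r + 1 - e = 2 * (k + 1 - e)" using k assms(1) by arith
  then have "(r + 1 - e) div 2 = k + 1 - e" by simp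
  moreover have "w - 1 = k + 1 - e" using w by arith
  ultimately show "(r + 1 - e) div 2 = w - 1" by simp
  show "2 * w - 3 = r - e" using k w assms(1) by arith
qed

lemma disjoint_family_covers_by_card:
  assumes "finite A" "finite I" "\<And>i. i \<in> I \<Longrightarrow> B i \<subseteq> A" "disjoint_family_on B I"
    and "(\<Sum>i\<in>I. card (B i)) = card A"
  shows "(\<Union>i\<in>I. B i) = A"
proof (rule card_subset_eq)
  have "\<And>i. i \<in> I \<Longrightarrow> finite (B i)" using assms(1,3) finite_subset by blast
  then show "card (\<Union>i\<in>I. B i) = card A" using card_UN_disjoint' assms(2,4,5) by metis
qed (use assms in auto)

lemma vec_subspace_dim_1:
  fixes P :: "('a::field ^ 'n) set"
  assumes "vec.subspace P" "vec.dim P = 1"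
  obtains p where "P = vec.span {p}" "p \<noteq> 0"
proof -
  obtain B where B: "B \<subseteq> P" "vec.independent B" "P \<subseteq> vec.span B" "card B = 1"
    using vec.basis_exists assms(2) by metis
  then obtain p where "B = {p}" using card_1_singletonE by metis
  then show ?thesis
    using that B vec.span_minimal[of B P] assms(1) vec.dependent_zero[of B] by blast
qed

locale quadform =
  fixes Q :: "'a::field ^ 'n \<Rightarrow> 'a"
  assumes quadratic_form: "quadratic_form Q"
begin

lemma polar_matrix:
  "\<exists>A :: 'a ^ 'n ^ 'n. (\<forall>v. Q v = (\<Sum>i\<in>UNIV. \<Sum>j\<in>UNIV. A $ i $ j * v $ i * v $ j))
     \<and> (\<forall>u v. polar Q u v = (\<Sum>i\<in>UNIV. \<Sum>j\<in>UNIV. A $ i $ j * (u $ i * v $ j + v $ i * u $ j)))"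
proof -
  obtain A :: "'a ^ 'n ^ 'n" where A: "\<And>v. Q v = (\<Sum>i\<in>UNIV. \<Sum>j\<in>UNIV. A $ i $ j * v $ i * v $ j)"
    using quadratic_form unfolding quadratic_form_def by blast
  have "polar Q u v = (\<Sum>i\<in>UNIV. \<Sum>j\<in>UNIV. A $ i $ j * (u $ i * v $ j + v $ i * u $ j))" for u v
    unfolding polar_def A sum_subtractf[symmetric]
    by (rule sum.cong[OF refl], rule sum.cong[OF refl]) (simp add: algebra_simps)
  with A show ?thesis by blast
qed

lemma polar_commute: "polar Q u v = polar Q v u"
  unfolding polar_def by (simp add: add.commute)

lemma polar_add_right: "polar Q u (v + w) = polar Q u v + polar Q u w"
proof -
  obtain A :: "'a ^ 'n ^ 'n"
    where A: "\<And>u v. polar Q u v = (\<Sum>i\<in>UNIV. \<Sum>j\<in>UNIV. A $ i $ j * (u $ i * v $ j + v $ i * u $ j))"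
    using polar_matrix by blast
  have "polar Q u (v + w)
      = (\<Sum>i\<in>UNIV. \<Sum>j\<in>UNIV. A $ i $ j * (u $ i * v $ j + v $ i * u $ j) + A $ i $ j * (u $ i * w $ j + w $ i * u $ j))"
    unfolding A by (rule sum.cong[OF refl], rule sum.cong[OF refl]) (simp add: algebra_simps)
  then show ?thesis by (simp add: A sum.distrib)
qed

lemma polar_scale_right: "polar Q u (c *s v) = c * polar Q u v"
proof -
  obtain A :: "'a ^ 'n ^ 'n"
    where A: "\<And>u v. polar Q u v = (\<Sum>i\<in>UNIV. \<Sum>j\<in>UNIV. A $ i $ j * (u $ i * v $ j + v $ i * u $ j))"
    using polar_matrix by blast
  have "polar Q u (c *s v) = (\<Sum>i\<in>UNIV. \<Sum>j\<in>UNIV. c * (A $ i $ j * (u $ i * v $ j + v $ i * u $ j)))"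
    unfolding A by (rule sum.cong[OF refl], rule sum.cong[OF refl]) (simp add: algebra_simps)
  then show ?thesis by (simp add: A sum_distrib_left)
qed

lemma polar_add_left: "polar Q (v + w) u = polar Q v u + polar Q w u"
  using polar_add_right polar_commute by metis

lemma polar_scale_left: "polar Q (c *s v) u = c * polar Q v u"
  using polar_scale_right polar_commute by metis

lemma polar_diff_right: "polar Q u (v - w) = polar Q u v - polar Q u w"
  using polar_add_right[of u v "(-1) *s w"] polar_scale_right[of u "-1" w]
  by (simp add: vector_sneg_minus1[symmetric])

lemma polar_diff_left: "polar Q (v - w) u = polar Q v u - polar Q w u"
  using polar_diff_right polar_commute by metis

lemma polar_zero_right [simp]: "polar Q u 0 = 0"
  using polar_scale_right[of u 0 0] by simp

lemma quad_scale: "Q (c *s v) = c\<^sup>2 * Q v"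
proof -
  obtain A :: "'a ^ 'n ^ 'n"
    where A: "\<And>v. Q v = (\<Sum>i\<in>UNIV. \<Sum>j\<in>UNIV. A $ i $ j * v $ i * v $ j)"
    using polar_matrix by blast
  have "Q (c *s v) = (\<Sum>i\<in>UNIV. \<Sum>j\<in>UNIV. c\<^sup>2 * (A $ i $ j * v $ i * v $ j))"
    unfolding A by (rule sum.cong[OF refl], rule sum.cong[OF refl]) (simp add: algebra_simps power2_eq_square)
  then show ?thesis by (simp add: A sum_distrib_left)
qed

lemma quad_add: "Q (u + v) = Q u + Q v + polar Q u v"
  unfolding polar_def by simp

lemma quad_diff: "Q (u - v) = Q u + Q v - polar Q u v"
  using quad_add[of u "(-1) *s v"] quad_scale[of "-1" v] polar_scale_right[of u "-1" v]
  by (simp add: vector_sneg_minus1[symmetric])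

lemma polar_self: "polar Q v v = 2 * Q v"
proof -
  have "v + v = (1 + 1) *s v" unfolding vec_eq_iff by (simp add: distrib_right)
  then have "Q (v + v) = (1 + 1)\<^sup>2 * Q v" using quad_scale by simp
  then show ?thesis unfolding polar_def by (simp add: algebra_simps power2_eq_square)
qed

lemma totally_singular_polar:
  assumes "vec.subspace G" "totally_singular Q G" "x \<in> G" "y \<in> G"
  shows "polar Q x y = 0"
  using assms vec.subspace_add[of G x y] unfolding polar_def totally_singular_def by simp

abbreviation witt :: nat where "witt \<equiv> witt_index Q UNIV"

lemma totally_singular_span_insert:
  assumes G: "vec.subspace G" "totally_singular Q G"
    and "Q v = 0" "\<forall>x\<in>G. polar Q v x = 0"
  shows "totally_singular Q (vec.span (insert v G))"
  unfolding totally_singular_def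
proof
  fix x assume "x \<in> vec.span (insert v G)"
  then obtain c y where "y \<in> G" "x = c *s v + y" using span_insert_subspace_iff[OF G(1)] by blast
  then show "Q x = 0"
    using assms unfolding totally_singular_def by (simp add: quad_add quad_scale polar_scale_left)
qed

lemma generator_not_perp:
  assumes G: "vec.subspace G" "totally_singular Q G" "vec.dim G = witt"
    and "Q v = 0" "v \<notin> G"
  obtains x where "x \<in> G" "polar Q v x \<noteq> 0"
proof (rule ccontr)
  assume "\<not> thesis"
  then have "\<forall>x\<in>G. polar Q v x = 0" using that by blast
  then have "totally_singular Q (vec.span (insert v G))"
    using totally_singular_span_insert assms by blast
  then have "vec.dim (vec.span (insert v G)) \<le> witt"
    using witt_index_ge[OF vec.subspace_span] by blast
  then show False using dim_span_insert_subspace[OF G(1) \<open>v \<notin> G\<close>] G(3) by simp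
qed

lemma nondeg_on_span_disjoint_generators:
  assumes "generator Q UNIV G" "generator Q UNIV G'" "G \<inter> G' = {0}"
  shows "nondeg_on Q (vec.span (G \<union> G'))"
proof -
  have sub: "vec.subspace G" "vec.subspace G'" and ts: "totally_singular Q G" "totally_singular Q G'"
    and dims: "vec.dim G = witt" "vec.dim G' = witt"
    using assms(1,2) unfolding generator_def by auto
  have span: "vec.span (G \<union> G') = {x + y |x y. x \<in> G \<and> y \<in> G'}"
    using sub by (simp add: vec.span_Un vec.span_eq_iff[THEN iffD2])
  have not_perp: "\<exists>z\<in>B. polar Q x z \<noteq> 0"
    if "x \<in> A" "x \<noteq> 0" "A \<inter> B = {0}" "vec.subspace B" "totally_singular Q A"
      "totally_singular Q B" "vec.dim B = witt" for A B x
    using generator_not_perp[of B x] that unfolding totally_singular_def by blast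
  show ?thesis
    unfolding nondeg_on_def
  proof (intro ballI impI)
    fix v assume "v \<in> vec.span (G \<union> G')" "v \<noteq> 0 \<and> Q v = 0"
    then obtain x y where xy: "x \<in> G" "y \<in> G'" "v = x + y" using span by blast
    show "\<exists>z\<in>vec.span (G \<union> G'). polar Q v z \<noteq> 0"
    proof (cases "x = 0")
      case False
      then obtain z where "z \<in> G'" "polar Q x z \<noteq> 0" using not_perp xy sub ts dims assms(3) by metis
      moreover have "polar Q y z = 0" using totally_singular_polar sub ts xy \<open>z \<in> G'\<close> by blast
      moreover have "z \<in> vec.span (G \<union> G')" using \<open>z \<in> G'\<close> by (simp add: vec.span_base)
      ultimately show ?thesis using xy by (intro bexI[of _ z]) (simp_all add: polar_add_left)
    next
      case True
      then have "y \<noteq> 0" using xy \<open>v \<noteq> 0 \<and> Q v = 0\<close> by simp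
      then obtain z where "z \<in> G" "polar Q y z \<noteq> 0"
        using not_perp xy sub ts dims assms(3) by (metis Int_commute)
      moreover have "z \<in> vec.span (G \<union> G')" using \<open>z \<in> G\<close> by (simp add: vec.span_base)
      ultimately show ?thesis using xy True by (intro bexI[of _ z]) simp_all
    qed
  qed
qed

end

locale cone_projection = quadform Q
  for Q :: "'a::{field,finite} ^ 'n \<Rightarrow> 'a" +
  fixes p :: "'a ^ 'n" and U :: "('a ^ 'n) set"
  assumes nondeg: "nondeg_on Q UNIV"
    and singular_point: "Q p = 0" and point_nonzero: "p \<noteq> 0"
    and subspace_U: "vec.subspace U" and dim_U: "vec.dim U + 1 = CARD('n)"
    and point_notin_U: "p \<notin> U"
begin

definition tangent :: "('a ^ 'n) set" where "tangent = {v. polar Q p v = 0}"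

definition H :: "('a ^ 'n) set" where "H = U \<inter> tangent"

definition cone :: "('a ^ 'n) set \<Rightarrow> ('a ^ 'n) set" where "cone X = vec.span (insert p X)"

definition proj :: "('a ^ 'n) set \<Rightarrow> ('a ^ 'n) set" where "proj X = cone X \<inter> U"

lemma decompose:
  obtains c u where "u \<in> U" "x = u + c *s p"
  using hyperplane_decomposition[OF subspace_U dim_U point_notin_U] by metis

lemma polar_point_self [simp]: "polar Q p p = 0"
  using polar_self singular_point by simp

lemma subspace_tangent: "vec.subspace tangent"
  unfolding tangent_def vec.subspace_def by (simp add: polar_add_right polar_scale_right)

lemma point_in_tangent: "p \<in> tangent"
  unfolding tangent_def by simp

lemma subspace_H: "vec.subspace H"
  unfolding H_def using subspace_U subspace_tangent by (rule vec.subspace_inter)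

lemma scale_in_U_iff: "c *s p \<in> U \<longleftrightarrow> c = 0"
proof
  assume "c *s p \<in> U"
  show "c = 0"
  proof (rule ccontr)
    assume "c \<noteq> 0"
    then have "p = inverse c *s (c *s p)" by simp
    then show False using \<open>c *s p \<in> U\<close> subspace_U vec.subspace_scale point_notin_U by metis
  qed
qed (simp add: subspace_U vec.subspace_0)

lemma dim_Int_U:
  assumes "vec.subspace W" "p \<in> W"
  shows "vec.dim (W \<inter> U) + 1 = vec.dim W"
proof (rule dim_Int_add_one[OF assms(1) subspace_U assms(2) point_notin_U])
  fix x
  obtain c u where "u \<in> U" "x = u + c *s p" using decompose .
  then show "\<exists>c. x - c *s p \<in> U" by (intro exI[of _ c]) simp
qed

lemma dim_Int_tangent:
  assumes "vec.subspace W" "w \<in> W" "polar Q p w \<noteq> 0"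
  shows "vec.dim (W \<inter> tangent) + 1 = vec.dim W"
proof (rule dim_Int_add_one[OF assms(1) subspace_tangent assms(2)])
  show "w \<notin> tangent" using assms(3) unfolding tangent_def by simp
  fix x
  show "\<exists>c. x - c *s w \<in> tangent"
    using assms(3) unfolding tangent_def
    by (intro exI[of _ "polar Q p x / polar Q p w"]) (simp add: polar_diff_right polar_scale_right)
qed

lemma dim_H: "vec.dim H + 1 = vec.dim U"
proof -
  obtain w where "polar Q p w \<noteq> 0"
    using nondeg singular_point point_nonzero unfolding nondeg_on_def by blast
  then have "vec.dim tangent + 1 = CARD('n)"
    using dim_Int_tangent[of UNIV w] by (simp add: card_cart_basis)
  moreover have "vec.dim (tangent \<inter> U) + 1 = vec.dim tangent"
    using dim_Int_U subspace_tangent point_in_tangent by blast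
  ultimately show ?thesis using dim_U unfolding H_def by (simp add: Int_commute)
qed

lemma dim_totally_singular_in_H:
  assumes "vec.subspace G" "G \<subseteq> H" "totally_singular Q G"
  shows "vec.dim G + 1 \<le> witt"
proof -
  have "\<forall>x\<in>G. polar Q p x = 0" using assms(2) unfolding H_def tangent_def by blast
  then have "totally_singular Q (vec.span (insert p G))"
    using totally_singular_span_insert assms singular_point by blast
  then have "vec.dim (vec.span (insert p G)) \<le> witt"
    using witt_index_ge[OF vec.subspace_span] by blast
  moreover have "p \<notin> G" using assms(2) point_notin_U unfolding H_def by blast
  ultimately show ?thesis using dim_span_insert_subspace[OF assms(1)] by simp
qed

lemma section_decomposition:
  assumes "vec.subspace V" "p \<in> V" "w \<in> V" "polar Q p w \<noteq> 0" "x \<in> V"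
  obtains y a b where "y \<in> V \<inter> H" "x = y + a *s p + b *s w"
proof -
  define b where "b = polar Q p x / polar Q p w"
  obtain a u where u: "u \<in> U" "x - b *s w = u + a *s p" using decompose .
  then have "u = x - b *s w - a *s p" by (simp add: algebra_simps)
  then have "u \<in> V" using assms vec.subspace_diff vec.subspace_scale by metis
  moreover have "polar Q p u = 0"
    using \<open>u = x - b *s w - a *s p\<close> assms(4) by (simp add: b_def polar_diff_right polar_scale_right)
  ultimately show ?thesis using that u unfolding H_def tangent_def by (simp add: algebra_simps)
qed

text \<open>A singular vector of \<open>V \<inter> H\<close> in its radical would, after correction by a multiple of \<open>p\<close>,
  lie in the radical of \<open>V\<close>; so it is a multiple of \<open>p\<close>, which meets \<open>U\<close> only in \<open>0\<close>.\<close>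
lemma nondeg_on_section:
  assumes V: "vec.subspace V" "nondeg_on Q V" "p \<in> V"
  shows "nondeg_on Q (V \<inter> H)"
  unfolding nondeg_on_def
proof (intro ballI impI)
  obtain w where w: "w \<in> V" "polar Q p w \<noteq> 0"
    using V point_nonzero singular_point unfolding nondeg_on_def by blast
  fix v assume v: "v \<in> V \<inter> H" "v \<noteq> 0 \<and> Q v = 0"
  show "\<exists>z\<in>V \<inter> H. polar Q v z \<noteq> 0"
  proof (rule ccontr)
    assume "\<not> ?thesis"
    then have radical: "\<And>y. y \<in> V \<inter> H \<Longrightarrow> polar Q v y = 0" by blast
    have "polar Q v p = 0" using v polar_commute unfolding H_def tangent_def by auto
    define c where "c = polar Q v w / polar Q p w"
    have "polar Q (v - c *s p) x = 0" if x: "x \<in> V" for x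
    proof -
      obtain y a b where y: "y \<in> V \<inter> H" "x = y + a *s p + b *s w"
        using section_decomposition[OF V(1,3) w x] .
      then have "polar Q p y = 0" unfolding H_def tangent_def by blast
      then have "polar Q (v - c *s p) x = b * (polar Q v w - c * polar Q p w)"
        using y radical[of y] \<open>polar Q v p = 0\<close>
        by (simp add: polar_diff_left polar_add_right polar_scale_right polar_scale_left algebra_simps)
      then show ?thesis using w(2) by (simp add: c_def)
    qed
    moreover have "Q (v - c *s p) = 0"
      using v \<open>polar Q v p = 0\<close> by (simp add: quad_diff quad_scale singular_point polar_scale_right)
    moreover have "v - c *s p \<in> V" using v V vec.subspace_diff vec.subspace_scale by blast
    ultimately have "v = c *s p" using V(2) unfolding nondeg_on_def by force
    then show False using v scale_in_U_iff unfolding H_def by auto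
  qed
qed

lemma nondeg_on_H: "nondeg_on Q H"
  using nondeg_on_section[of UNIV] nondeg by simp

subsection \<open>Generators through the point\<close>

lemma dim_generator_Int_H:
  assumes "generator Q UNIV G" "p \<in> G"
  shows "vec.dim (G \<inter> H) + 1 = witt"
proof -
  have G: "vec.subspace G" "totally_singular Q G" "vec.dim G = witt"
    using assms(1) unfolding generator_def by auto
  then have "G \<subseteq> tangent" using totally_singular_polar assms(2) unfolding tangent_def by blast
  then have "G \<inter> H = G \<inter> U" unfolding H_def by blast
  then show ?thesis using dim_Int_U[OF G(1) assms(2)] G(3) by simp
qed

lemma witt_index_H:
  assumes "generator Q UNIV G" "p \<in> G"
  shows "witt_index Q H = witt - 1"
proof (rule witt_index_eqI)
  show "vec.subspace (G \<inter> H)" "totally_singular Q (G \<inter> H)"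
    using assms(1) subspace_H vec.subspace_inter unfolding generator_def totally_singular_def by auto
  show "vec.dim (G \<inter> H) = witt - 1" using dim_generator_Int_H[OF assms] by simp
qed (use dim_totally_singular_in_H in fastforce)+

lemma generator_Int_H:
  assumes "generator Q UNIV G" "p \<in> G"
  shows "generator Q H (G \<inter> H)"
  using assms subspace_H vec.subspace_inter dim_generator_Int_H[OF assms] witt_index_H[OF assms]
  unfolding generator_def totally_singular_def by auto

subsection \<open>Projections of generators avoiding the point\<close>

lemma mem_cone_iff:
  assumes "generator Q UNIV G"
  shows "x \<in> cone G \<longleftrightarrow> (\<exists>c y. y \<in> G \<and> x = c *s p + y)"
  using span_insert_subspace_iff assms unfolding cone_def generator_def by blast

lemma subspace_cone: "vec.subspace (cone X)"
  unfolding cone_def by (rule vec.subspace_span)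

lemma point_in_cone: "p \<in> cone X"
  unfolding cone_def by (simp add: vec.span_base)

lemma subspace_proj: "vec.subspace (proj X)"
  unfolding proj_def using subspace_cone subspace_U by (rule vec.subspace_inter)

lemma dim_proj:
  assumes "generator Q UNIV G" "p \<notin> G"
  shows "vec.dim (proj G) = witt"
  using dim_Int_U[OF subspace_cone point_in_cone, of G] dim_span_insert_subspace[of G p] assms
  unfolding proj_def cone_def generator_def by simp

lemma totally_singular_proj_Int_H:
  assumes "generator Q UNIV G"
  shows "totally_singular Q (proj G \<inter> H)"
  unfolding totally_singular_def
proof
  fix x assume "x \<in> proj G \<inter> H"
  then obtain c y where y: "y \<in> G" "x = c *s p + y" and "polar Q p x = 0"
    using mem_cone_iff[OF assms] unfolding proj_def H_def tangent_def by auto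
  then have "polar Q p y = 0" by (simp add: polar_add_right polar_scale_right)
  moreover have "Q y = 0" using y assms unfolding generator_def totally_singular_def by blast
  ultimately show "Q x = 0" using y by (simp add: quad_add quad_scale singular_point polar_scale_left)
qed

lemma dim_proj_Int_H:
  assumes "generator Q UNIV G" "p \<notin> G"
  shows "vec.dim (proj G \<inter> H) + 1 = witt"
proof -
  obtain w where w: "w \<in> G" "polar Q p w \<noteq> 0"
    using generator_not_perp[of G p] assms singular_point unfolding generator_def by blast
  have "w \<in> cone G" unfolding cone_def using w(1) by (simp add: vec.span_base)
  then have "vec.dim (cone G \<inter> tangent) + 1 = witt + 1"
    using dim_Int_tangent[OF subspace_cone _ w(2)] dim_span_insert_subspace[of G p] assms
    unfolding cone_def generator_def by simp
  moreover have "vec.dim (cone G \<inter> tangent \<inter> U) + 1 = vec.dim (cone G \<inter> tangent)"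
    using dim_Int_U vec.subspace_inter[OF subspace_cone subspace_tangent] point_in_cone point_in_tangent
    by blast
  moreover have "proj G \<inter> H = cone G \<inter> tangent \<inter> U" unfolding proj_def H_def by blast
  ultimately show ?thesis by simp
qed

lemma proj_not_subset_H:
  assumes "generator Q UNIV G" "p \<notin> G"
  shows "\<not> proj G \<subseteq> H"
proof
  assume "proj G \<subseteq> H"
  then have "proj G \<inter> H = proj G" by blast
  then show False using dim_proj[OF assms] dim_proj_Int_H[OF assms] by simp
qed

lemma generator_proj_Int_H:
  assumes "generator Q UNIV G" "p \<notin> G" "generator Q UNIV G0" "p \<in> G0"
  shows "generator Q H (proj G \<inter> H)"
  using dim_proj_Int_H[OF assms(1,2)] witt_index_H[OF assms(3,4)] totally_singular_proj_Int_H[OF assms(1)]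
    vec.subspace_inter[OF subspace_proj subspace_H]
  unfolding generator_def by auto

lemma proj_Int_generator:
  assumes "generator Q UNIV G" "generator Q UNIV G0" "p \<in> G0" "G \<inter> G0 = {0}"
  shows "proj G \<inter> G0 = {0}"
proof (intro equalityI subsetI)
  fix x assume x: "x \<in> proj G \<inter> G0"
  then obtain c y where y: "y \<in> G" "x = c *s p + y" using mem_cone_iff[OF assms(1)] unfolding proj_def by auto
  then have "y = x - c *s p" by simp
  moreover have "vec.subspace G0" using assms(2) unfolding generator_def by blast
  ultimately have "y \<in> G0" using x assms(3) by (blast intro: vec.subspace_diff vec.subspace_scale)
  then have "x = c *s p" using y assms(4) by auto
  then show "x \<in> {0}" using x scale_in_U_iff unfolding proj_def by auto
qed (use subspace_proj assms(2) vec.subspace_0 in \<open>auto simp: generator_def\<close>)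

subsection \<open>Projections of two disjoint generators\<close>

lemma proj_Int_decomposition:
  assumes G: "generator Q UNIV G" and G': "generator Q UNIV G'" and "G \<inter> G' = {0}"
    and v: "v \<in> proj G \<inter> proj G'"
  obtains y y' a c where "y \<in> G" "y' \<in> G'" "v = a *s p + y" "y - y' = c *s p" "c = 0 \<Longrightarrow> y = 0"
proof -
  obtain a y where y: "y \<in> G" "v = a *s p + y" using v mem_cone_iff[OF G] unfolding proj_def by auto
  obtain b y' where y': "y' \<in> G'" "v = b *s p + y'" using v mem_cone_iff[OF G'] unfolding proj_def by auto
  have diff: "y - y' = (b - a) *s p"
    using y(2) y'(2) by (simp add: vec.scale_left_diff_distrib algebra_simps)
  moreover have "y = 0" if "b - a = 0"
  proof -
    have "y = y'" using diff that by simp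
    then show ?thesis using y(1) y'(1) \<open>G \<inter> G' = {0}\<close> by blast
  qed
  ultimately show ?thesis using that y y'(1) by blast
qed

text \<open>Two points of \<open>G\<close> and \<open>G'\<close> differing by a nonzero multiple of \<open>p\<close> are orthogonal to \<open>p\<close>,
  since their difference is singular.\<close>
lemma proj_Int_subset_H:
  assumes G: "generator Q UNIV G" and G': "generator Q UNIV G'" and "G \<inter> G' = {0}"
  shows "proj G \<inter> proj G' \<subseteq> H"
proof
  fix v assume v: "v \<in> proj G \<inter> proj G'"
  obtain y y' a c where y: "y \<in> G" "y' \<in> G'" "v = a *s p + y" "y - y' = c *s p" "c = 0 \<Longrightarrow> y = 0"
    by (rule proj_Int_decomposition[OF assms v]) (rule that)
  have "Q y = 0" "Q y' = 0" using y G G' unfolding generator_def totally_singular_def by auto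
  have "polar Q p y = 0"
  proof (cases "c = 0")
    case False
    have "Q (y - y') = 0" unfolding y(4) by (simp add: quad_scale singular_point)
    then have "polar Q y y' = 0" using \<open>Q y = 0\<close> \<open>Q y' = 0\<close> by (simp add: quad_diff)
    then have "polar Q (y - y') y = 0"
      using \<open>Q y = 0\<close> polar_commute[of y' y] by (simp add: polar_diff_left polar_self)
    then show ?thesis using False unfolding y(4) by (simp add: polar_scale_left)
  qed (use y(5) in simp)
  then have "polar Q p v = 0" using y(3) by (simp add: polar_add_right polar_scale_right)
  then show "v \<in> H" using v unfolding proj_def H_def tangent_def by blast
qed

lemma dim_proj_Int_le:
  assumes G: "generator Q UNIV G" "p \<notin> G" and G': "generator Q UNIV G'" "p \<notin> G'"
    and "G \<inter> G' = {0}"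
  shows "vec.dim (proj G \<inter> proj G') \<le> 1"
proof -
  have sub: "vec.subspace G" "vec.subspace G'" using G G' unfolding generator_def by auto
  have "vec.dim (G \<union> G') = 2 * witt"
    using dim_span_Un_disjoint[OF sub \<open>G \<inter> G' = {0}\<close>] G G' unfolding generator_def by simp
  moreover have "G \<union> G' \<subseteq> vec.span (cone G \<union> cone G')"
    using vec.span_superset[of "insert p G"] vec.span_superset[of "insert p G'"]
      vec.span_superset[of "cone G \<union> cone G'"] unfolding cone_def by blast
  ultimately have "2 * witt \<le> vec.dim (vec.span (cone G \<union> cone G'))"
    using vec.dim_subset by metis
  moreover have "vec.dim (vec.span (cone G \<union> cone G')) + vec.dim (cone G \<inter> cone G') = 2 * (witt + 1)"
    using vec.dim_sums_Int[OF subspace_cone subspace_cone, of G G'] dim_span_insert_subspace[of G p]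
      dim_span_insert_subspace[of G' p] sub G G'
    by (simp add: vec.span_Un vec.span_span cone_def generator_def)
  ultimately have "vec.dim (cone G \<inter> cone G') \<le> 2" by simp
  moreover have "vec.dim (cone G \<inter> cone G' \<inter> U) + 1 = vec.dim (cone G \<inter> cone G')"
    using dim_Int_U vec.subspace_inter[OF subspace_cone subspace_cone] point_in_cone by blast
  moreover have "proj G \<inter> proj G' = cone G \<inter> cone G' \<inter> U" unfolding proj_def by blast
  ultimately show ?thesis by simp
qed

lemma dim_proj_Int_H_Int_le:
  assumes "generator Q UNIV G" "p \<notin> G" "generator Q UNIV G'" "p \<notin> G'" "G \<inter> G' = {0}"
  shows "vec.dim (proj G \<inter> H \<inter> (proj G' \<inter> H)) \<le> 1"
proof -
  have "vec.dim (proj G \<inter> H \<inter> (proj G' \<inter> H)) \<le> vec.dim (proj G \<inter> proj G')"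
    by (rule vec.dim_subset) blast
  then show ?thesis using dim_proj_Int_le[OF assms] by simp
qed

lemma point_in_span_if_proj_meet:
  assumes G: "generator Q UNIV G" and G': "generator Q UNIV G'" and "G \<inter> G' = {0}"
    and v: "v \<in> proj G \<inter> proj G'" "v \<noteq> 0"
  shows "p \<in> vec.span (G \<union> G')"
proof -
  obtain y y' a c where y: "y \<in> G" "y' \<in> G'" "v = a *s p + y" "y - y' = c *s p" "c = 0 \<Longrightarrow> y = 0"
    by (rule proj_Int_decomposition[OF G G' \<open>G \<inter> G' = {0}\<close> v(1)]) (rule that)
  have "c \<noteq> 0"
  proof
    assume "c = 0"
    then have "a *s p \<in> U" using y v(1) unfolding proj_def by simp
    then show False using y \<open>c = 0\<close> v(2) scale_in_U_iff by simp
  qed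
  have "y - y' \<in> vec.span (G \<union> G')" using y(1,2) by (auto intro: vec.span_diff vec.span_base)
  then have "inverse c *s (y - y') \<in> vec.span (G \<union> G')" by (rule vec.span_scale)
  moreover have "p = inverse c *s (y - y')" using y(4) \<open>c \<noteq> 0\<close> by simp
  ultimately show ?thesis by (simp only:)
qed

lemma span_proj_Un:
  assumes G: "generator Q UNIV G" and G': "generator Q UNIV G'"
    and "p \<in> vec.span (G \<union> G')"
  shows "vec.span (proj G \<union> proj G') = vec.span (G \<union> G') \<inter> U"
proof (intro equalityI subsetI)
  have "cone X \<subseteq> vec.span (G \<union> G')" if "X = G \<or> X = G'" for X
    using that assms(3) vec.span_superset[of "G \<union> G'"] vec.span_minimal[OF _ vec.subspace_span]
    unfolding cone_def by (metis Un_upper1 Un_upper2 insert_subset order_trans)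
  then have "proj G \<union> proj G' \<subseteq> vec.span (G \<union> G') \<inter> U" unfolding proj_def by blast
  then show "x \<in> vec.span (G \<union> G') \<inter> U" if "x \<in> vec.span (proj G \<union> proj G')" for x
    using that vec.span_minimal[OF _ vec.subspace_inter[OF vec.subspace_span subspace_U]] by blast
next
  fix x assume x: "x \<in> vec.span (G \<union> G') \<inter> U"
  have sub: "vec.subspace G" "vec.subspace G'" using G G' unfolding generator_def by auto
  obtain y y' where y: "y \<in> G" "y' \<in> G'" "x = y + y'"
    using x unfolding vec.span_Un vec.span_eq_iff[THEN iffD2, OF sub(1)] vec.span_eq_iff[THEN iffD2, OF sub(2)]
    by blast
  obtain c u where u: "u \<in> U" "y = u + c *s p" using decompose .
  obtain c' u' where u': "u' \<in> U" "y' = u' + c' *s p" using decompose .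
  have "u = (- c) *s p + y" "u' = (- c') *s p + y'" using u u' by simp_all
  then have "u \<in> proj G" "u' \<in> proj G'"
    using u(1) u'(1) y mem_cone_iff[OF G] mem_cone_iff[OF G'] unfolding proj_def by blast+
  have eq: "(c + c') *s p = x - (u + u')" using y u u' by (simp add: algebra_simps)
  have "x - (u + u') \<in> U" using x u(1) u'(1) subspace_U by (blast intro: vec.subspace_add vec.subspace_diff)
  then have "(c + c') *s p \<in> U" unfolding eq .
  then have "c + c' = 0" unfolding scale_in_U_iff .
  then have "x = u + u'" using eq by simp
  then show "x \<in> vec.span (proj G \<union> proj G')"
    using \<open>u \<in> proj G\<close> \<open>u' \<in> proj G'\<close> by (auto intro: vec.span_add vec.span_base)
qed

text \<open>The two generators span a hyperbolic \<open>(2 witt - 1)\<close>-space through \<open>p\<close>; cutting it with \<open>H\<close>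
  leaves a non-degenerate \<open>(2 witt - 3)\<close>-space whose generators have one dimension less.\<close>
lemma quadric_type_span_proj:
  assumes G: "generator Q UNIV G" "p \<notin> G" and G': "generator Q UNIV G'" "p \<notin> G'"
    and "G \<inter> G' = {0}" and meet: "vec.dim (proj G \<inter> H \<inter> (proj G' \<inter> H)) = 1"
  shows "quadric_type Q (vec.span (proj G \<union> proj G') \<inter> H) (2 * witt - 3) 0"
proof -
  define V where "V = vec.span (G \<union> G')"
  obtain v where v: "v \<in> proj G \<inter> proj G'" "v \<noteq> 0"
    using meet vec.dim_eq_0[of "proj G \<inter> H \<inter> (proj G' \<inter> H)"] by fastforce
  have "p \<in> V" unfolding V_def using point_in_span_if_proj_meet[OF G(1) G'(1) \<open>G \<inter> G' = {0}\<close> v] .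
  have V: "vec.subspace V" "nondeg_on Q V" "vec.dim V = 2 * witt"
    using nondeg_on_span_disjoint_generators[OF G(1) G'(1) \<open>G \<inter> G' = {0}\<close>]
      dim_span_Un_disjoint[of G G'] G G' \<open>G \<inter> G' = {0}\<close>
    unfolding V_def generator_def by auto
  have span_cut: "vec.span (proj G \<union> proj G') \<inter> H = V \<inter> H"
    using span_proj_Un[OF G(1) G'(1)] \<open>p \<in> V\<close> unfolding V_def H_def by blast
  obtain w where w: "w \<in> V" "polar Q p w \<noteq> 0"
    using V(2) \<open>p \<in> V\<close> point_nonzero singular_point unfolding nondeg_on_def by blast
  have "vec.dim (V \<inter> tangent \<inter> U) + 1 = vec.dim (V \<inter> tangent)"
    using dim_Int_U vec.subspace_inter[OF V(1) subspace_tangent] \<open>p \<in> V\<close> point_in_tangent by blast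
  then have dim: "vec.dim (V \<inter> H) + 2 = 2 * witt"
    using dim_Int_tangent[OF V(1) w] V(3) unfolding H_def by (simp add: Int_assoc Int_commute Int_left_commute)
  have "proj G \<inter> H \<subseteq> V \<inter> H" using span_cut vec.span_superset by blast
  have "vec.dim (proj G \<inter> H \<inter> (proj G' \<inter> H)) \<le> vec.dim (proj G \<inter> H)" by (rule vec.dim_subset) blast
  then have "witt \<ge> 2" using meet dim_proj_Int_H[OF G] by simp
  have "witt_index Q (V \<inter> H) = witt - 1"
  proof (rule witt_index_eqI)
    show "vec.subspace (proj G \<inter> H)" using subspace_proj subspace_H by (rule vec.subspace_inter)
  qed (use \<open>proj G \<inter> H \<subseteq> V \<inter> H\<close> totally_singular_proj_Int_H[OF G(1)] dim_proj_Int_H[OF G]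
      dim_totally_singular_in_H in fastforce)+
  with \<open>witt \<ge> 2\<close> dim nondeg_on_section[OF V(1,2) \<open>p \<in> V\<close>] show ?thesis
    unfolding quadric_type_def span_cut
    using vec.subspace_inter[OF V(1) subspace_H] by auto
qed

subsection \<open>The projected spread\<close>

lemma card_proj_diff_H:
  assumes "generator Q UNIV G" "p \<notin> G"
  shows "card (proj G - H) = CARD('a) ^ witt - CARD('a) ^ (witt - 1)"
proof -
  have "vec.dim (proj G \<inter> H) = witt - 1" using dim_proj_Int_H[OF assms] by simp
  then show ?thesis
    using card_Diff_subset_Int[of "proj G" H] dim_proj[OF assms] card_subspace[OF subspace_proj]
      card_subspace[OF vec.subspace_inter[OF subspace_proj subspace_H]] by simp
qed

lemma card_U_diff_H: "card (U - H) = CARD('a) ^ vec.dim U - CARD('a) ^ (vec.dim U - 1)"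
proof -
  have "vec.dim H = vec.dim U - 1" "H \<subseteq> U" using dim_H unfolding H_def by auto
  then show ?thesis
    using card_Diff_subset[of H U] card_subspace[OF subspace_U] card_subspace[OF subspace_H] by simp
qed

text \<open>Every projection contributes \<open>q^witt - q^(witt - 1)\<close> points of \<open>U - H\<close>, and these sets are
  pairwise disjoint; \<open>q^(dim U - witt)\<close> of them therefore exhaust the \<open>q^dim U - q^(dim U - 1)\<close>
  points of \<open>U - H\<close>.\<close>
lemma proj_partition:
  assumes I: "finite I" "card I = CARD('a) ^ (vec.dim U - witt)"
    and gens: "\<And>i. i \<in> I \<Longrightarrow> generator Q UNIV (G i) \<and> p \<notin> G i"
    and disj: "\<And>i j. i \<in> I \<Longrightarrow> j \<in> I \<Longrightarrow> i \<noteq> j \<Longrightarrow> G i \<inter> G j = {0}"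
    and G0: "generator Q UNIV G0" "p \<in> G0"
    and v: "v \<in> U" "v \<notin> H"
  shows "\<exists>!i. i \<in> I \<and> v \<in> proj (G i)"
proof -
  let ?q = "CARD('a)" and ?d = "vec.dim U"
  have "vec.dim (G0 \<inter> H) \<le> vec.dim H" by (rule vec.dim_subset) blast
  then have witt: "1 \<le> witt" "witt \<le> ?d" using dim_generator_Int_H[OF G0] dim_H by auto
  have "card (proj (G i) - H) = ?q ^ witt - ?q ^ (witt - 1)" if "i \<in> I" for i
    using card_proj_diff_H gens[OF that] by blast
  moreover note card_U_diff_H
  moreover have "?q ^ (?d - witt) * (?q ^ witt - ?q ^ (witt - 1)) = ?q ^ ?d - ?q ^ (?d - 1)"
  proof -
    have "?q ^ (?d - witt) * ?q ^ witt = ?q ^ ?d" "?q ^ (?d - witt) * ?q ^ (witt - 1) = ?q ^ (?d - 1)"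
      using witt by (simp_all flip: power_add)
    then show ?thesis by (simp add: diff_mult_distrib2)
  qed
  moreover have "disjoint_family_on (\<lambda>i. proj (G i) - H) I"
    using proj_Int_subset_H gens disj unfolding disjoint_family_on_def by blast
  ultimately have "(\<Union>i\<in>I. proj (G i) - H) = U - H"
    using disjoint_family_covers_by_card[of "U - H" I "\<lambda>i. proj (G i) - H"] I
    unfolding proj_def by auto
  then obtain i where "i \<in> I" "v \<in> proj (G i)" using v by blast
  moreover have "j = i" if "j \<in> I" "v \<in> proj (G j)" for j
    using proj_Int_subset_H[of "G i" "G j"] gens disj \<open>i \<in> I\<close> \<open>v \<in> proj (G i)\<close> that v by blast
  ultimately show ?thesis by blast
qed

lemma avsp_proj:
  assumes "finite I" "card I = CARD('a) ^ (vec.dim U - witt)"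
    and gens: "\<And>i. i \<in> I \<Longrightarrow> generator Q UNIV (G i) \<and> p \<notin> G i"
    and "\<And>i j. i \<in> I \<Longrightarrow> j \<in> I \<Longrightarrow> i \<noteq> j \<Longrightarrow> G i \<inter> G j = {0}"
    and "generator Q UNIV G0" "p \<in> G0"
  shows "avsp U H (\<lambda>i. proj (G i)) I"
  unfolding avsp_def
  using proj_partition[OF assms] subspace_U subspace_H dim_H subspace_proj proj_not_subset_H gens
  by (auto simp: H_def proj_def)

theorem quadric_avsp_proj:
  fixes Sigma :: "nat \<Rightarrow> ('a ^ 'n) set" and e r N :: nat
  assumes e: "e \<le> 2" "odd (r + e)" and r: "CARD('n) = r + 3" and witt: "witt = (r + 3 - e) div 2"
    and N: "N = CARD('a) ^ ((r + e + 1) div 2)"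
    and gens: "\<forall>i\<in>{1..N+1}. generator Q UNIV (Sigma i)"
    and disj: "\<forall>i\<in>{1..N+1}. \<forall>j\<in>{1..N+1}. i \<noteq> j \<longrightarrow> Sigma i \<inter> Sigma j = {0}"
    and p: "p \<in> Sigma (N + 1)"
  shows "quadric_avsp Q e r U H (Sigma (N + 1) \<inter> H) N (\<lambda>i. proj (Sigma i))"
proof -
  note arith = quadric_index_arith[OF e witt]
  have G0: "generator Q UNIV (Sigma (N + 1))" using gens by simp
  have disj': "Sigma i \<inter> Sigma j = {0}" if "i \<in> {1..N+1}" "j \<in> {1..N+1}" "i \<noteq> j" for i j
    using disj that by blast
  have avoid: "generator Q UNIV (Sigma i)" "p \<notin> Sigma i" if "i \<in> {1..N}" for i
    using gens disj'[of i "N + 1"] that point_nonzero p by auto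
  have dim_U': "vec.dim U = r + 2" using dim_U r by simp
  then have "card {1..N} = CARD('a) ^ (vec.dim U - witt)" using N arith(1) by simp
  then have "avsp U H (\<lambda>i. proj (Sigma i)) {1..N}"
    using avsp_proj[of "{1..N}"] avoid disj' G0 p by auto
  moreover have "quadric_type Q H r e"
    using e subspace_H dim_H dim_U' nondeg_on_H witt_index_H[OF G0 p] arith(2)
    unfolding quadric_type_def by simp
  moreover have "vec.dim (proj (Sigma i)) = (r + 3 - e) div 2" "generator Q H (proj (Sigma i) \<inter> H)"
    "proj (Sigma i) \<inter> H \<inter> (Sigma (N + 1) \<inter> H) = {0}" if "i \<in> {1..N}" for i
  proof -
    show "vec.dim (proj (Sigma i)) = (r + 3 - e) div 2" using dim_proj[OF avoid[OF that]] witt by simp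
    show "generator Q H (proj (Sigma i) \<inter> H)" using generator_proj_Int_H[OF avoid[OF that] G0 p] .
    have "proj (Sigma i) \<inter> Sigma (N + 1) = {0}"
      using proj_Int_generator[OF avoid(1)[OF that] G0 p] disj'[of i "N + 1"] that by simp
    then show "proj (Sigma i) \<inter> H \<inter> (Sigma (N + 1) \<inter> H) = {0}"
      using subspace_H vec.subspace_0 by blast
  qed
  moreover have "vec.dim (proj (Sigma i) \<inter> proj (Sigma j)) \<le> 1"
    "vec.dim (proj (Sigma i) \<inter> H \<inter> (proj (Sigma j) \<inter> H)) \<le> 1"
    "vec.dim (proj (Sigma i) \<inter> H \<inter> (proj (Sigma j) \<inter> H)) = 1 \<Longrightarrow>
       quadric_type Q (vec.span (proj (Sigma i) \<union> proj (Sigma j)) \<inter> H) (r - e) 0"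
    if "i \<in> {1..N}" "j \<in> {1..N}" "i \<noteq> j" for i j
  proof -
    have Gij: "generator Q UNIV (Sigma i)" "p \<notin> Sigma i" "generator Q UNIV (Sigma j)" "p \<notin> Sigma j"
      "Sigma i \<inter> Sigma j = {0}"
      using avoid disj' that by auto
    show "vec.dim (proj (Sigma i) \<inter> proj (Sigma j)) \<le> 1" by (rule dim_proj_Int_le[OF Gij])
    show "vec.dim (proj (Sigma i) \<inter> H \<inter> (proj (Sigma j) \<inter> H)) \<le> 1" by (rule dim_proj_Int_H_Int_le[OF Gij])
    show "vec.dim (proj (Sigma i) \<inter> H \<inter> (proj (Sigma j) \<inter> H)) = 1 \<Longrightarrow>
        quadric_type Q (vec.span (proj (Sigma i) \<union> proj (Sigma j)) \<inter> H) (r - e) 0"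
      using quadric_type_span_proj[OF Gij] arith(3) by simp
  qed
  ultimately show ?thesis
    unfolding quadric_avsp_def by (intro conjI ballI impI N dim_U' generator_Int_H[OF G0 p])
qed

end

theorem mainTheorem2:
  fixes Q :: "'a::{field,finite} ^ 'n \<Rightarrow> 'a"
    and e r N :: nat
    and Sigma :: "nat \<Rightarrow> ('a ^ 'n) set"
    and P U :: "('a ^ 'n) set"
  assumes "e \<le> 2" and "odd (r + e)"
    and "CARD('n) = r + 3"
    and "quadratic_form Q"
    and "quadric_type Q UNIV (r + 2) e"
    and "N = CARD('a) ^ ((r + e + 1) div 2)"
    and "\<forall>i\<in>{1..N+1}. generator Q UNIV (Sigma i)"
    and "\<forall>i\<in>{1..N+1}. \<forall>j\<in>{1..N+1}. i \<noteq> j \<longrightarrow> Sigma i \<inter> Sigma j = {0}"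
    and "vec.subspace P" and "vec.dim P = 1" and "P \<subseteq> Sigma (N + 1)"
    and "vec.subspace U" and "vec.dim U = r + 2" and "\<not> P \<subseteq> U"
  shows "quadric_avsp Q e r U (U \<inter> perp Q P) (Sigma (N + 1) \<inter> (U \<inter> perp Q P)) N
           (\<lambda>i. vec.span (P \<union> Sigma i) \<inter> U)"
proof -
  interpret quadform Q using assms(4) by unfold_locales
  obtain p where P: "P = vec.span {p}" "p \<noteq> 0"
    using vec_subspace_dim_1[OF assms(9,10)] by blast
  have "p \<in> Sigma (N + 1)" "p \<notin> U"
    using P assms(11,12,14) vec.span_base vec.span_minimal[of "{p}" U] by blast+
  moreover have "Q p = 0"
    using assms(7) \<open>p \<in> Sigma (N + 1)\<close> unfolding generator_def totally_singular_def by auto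
  moreover have "nondeg_on Q UNIV" and witt: "witt = (r + 3 - e) div 2"
    using assms(5) unfolding quadric_type_def by (auto simp: add.assoc)
  ultimately interpret cone_projection Q p U
    using P assms(3,12,13) by unfold_locales auto
  have "U \<inter> perp Q P = H"
    unfolding H_def tangent_def perp_def P vec.span_singleton
    by (auto simp: polar_scale_left dest: spec[of _ 1])
  moreover have "vec.span (P \<union> Sigma i) \<inter> U = proj (Sigma i)" for i
    unfolding proj_def cone_def P insert_is_Un[of p "Sigma i"] vec.span_Un vec.span_span ..
  ultimately show ?thesis
    using quadric_avsp_proj[OF assms(1,2,3) witt assms(6,7,8) \<open>p \<in> Sigma (N + 1)\<close>] by simp
qed

end
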